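(* Consider $x[t+1]=Ax[t]$, $y_i[t]=C_ix[t]+e_i[t]$, $i=1,\dots,p$, with $A\in\mathbb{R}^{n\times n}$, $C_i\in\mathbb{R}^{1\times n}$, $C\in\mathbb{R}^{p\times n}$ the matrix with rows $C_i$, where the attack $e[t]=(e_1[t],\dots,e_p[t])^T$ is arbitrary on a fixed set of at most $s$ indices and zero elsewhere for all $t$. For each $i$ let $Y_i[t]=(y_i[t],y_i[t+1],\dots,y_i[t+n-1])^T\in\mathbb{R}^n$ and $Y[t]=(Y_1[t]^T,\dots,Y_p[t]^T)^T\in\mathbb{R}^{pn}$. Let $D\in\mathbb{R}^{v\times p}$. Suppose there exists an estimator whose output sequence $(\hat x[t])_{t\in\mathbb{N}}$ is determined solely by the sequence $\big((D\otimes I_n)Y[t]\big)_{t\in\mathbb{N}}$ and which satisfies $\lim_{t\to\infty}\|x[t]-\hat x[t]\|=0$ for every initial condition $x[0]\in\mathbb{R}^n$ and every such attack signal. Then $(A,C)$ is $2s$-sparse detectable with respect to $D$.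
   Context: A pair $(A,M)$ is detectable if every eigenvalue of $A$ of modulus $\ge1$ is observable, i.e. $Mw\ne0$ for every (complex) eigenvector $w$ of $A$ whose eigenvalue has modulus $\ge 1$. Let $\mathbf{E}_p$ be the standard basis of $\mathbb{R}^p$. For $D\in\mathbb{R}^{v\times p}$ and $k\in\mathbb{N}$, let $\mathbf{P}_k(D)$ be the set of all real matrices $L$ with $v$ columns (any number of rows) such that $\ker(L)=D(\mathrm{span}\,V)$ for some $V\subseteq\mathbf{E}_p$ with $|V|\le k$. $(A,C)$ is $k$-sparse detectable with respect to $D$ if $(A,LDC)$ is detectable for every $L\in\mathbf{P}_k(D)$. $\otimes$ is the Kronecker product. *)

theory Defs
  imports Jordan_Normal_Form.Char_Poly Jordan_Normal_Form.Matrix_Kernel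
begin

text \<open>Matrices/vectors are Jordan_Normal_Form matrices with explicit (nat) dimensions;
  all indices start at 0.\<close>

text \<open>Kronecker product: (X \<otimes> Z) at ((i,k),(j,l)) = X(i,j) * Z(k,l), row index i*rows(Z)+k.\<close>
definition kron :: "'a::semiring_0 mat \<Rightarrow> 'a mat \<Rightarrow> 'a mat" where
  "kron X Z = mat (dim_row X * dim_row Z) (dim_col X * dim_col Z)
     (\<lambda>(i,j). X $$ (i div dim_row Z, j div dim_col Z) * Z $$ (i mod dim_row Z, j mod dim_col Z))"

definition detectable :: "real mat \<Rightarrow> real mat \<Rightarrow> bool" where
  "detectable A M = (\<forall>w lam. eigenvector (map_mat complex_of_real A) w lam \<and> 1 \<le> cmod lam
      \<longrightarrow> map_mat complex_of_real M *\<^sub>v w \<noteq> 0\<^sub>v (dim_row M))"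

definition std_basis :: "nat \<Rightarrow> real vec set" where
  "std_basis p = {unit_vec p j | j. j < p}"

definition span_vecs :: "nat \<Rightarrow> real vec set \<Rightarrow> real vec set" where
  "span_vecs p V = {finsum_vec TYPE(real) p (\<lambda>w. c w \<cdot>\<^sub>v w) V | c. True}"

text \<open>P_k(D): real matrices L with v = rows(D) columns (any number of rows) such that
  ker L = D(span V) for some V \<subseteq> E_p, |V| \<le> k.\<close>
definition P_set :: "nat \<Rightarrow> real mat \<Rightarrow> real mat set" where
  "P_set k D = {L. dim_col L = dim_row D \<and>
     (\<exists>V \<subseteq> std_basis (dim_col D). card V \<le> k \<and>
        mat_kernel L = (\<lambda>z. D *\<^sub>v z) ` span_vecs (dim_col D) V)}"

definition sparse_detectable :: "nat \<Rightarrow> real mat \<Rightarrow> real mat \<Rightarrow> real mat \<Rightarrow> bool" where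
  "sparse_detectable k A C D = (\<forall>L \<in> P_set k D. detectable A (L * D * C))"

definition traj :: "real mat \<Rightarrow> real vec \<Rightarrow> nat \<Rightarrow> real vec" where
  "traj A x0 t = (A ^\<^sub>m t) *\<^sub>v x0"

definition meas :: "real mat \<Rightarrow> real mat \<Rightarrow> real vec \<Rightarrow> (nat \<Rightarrow> real vec) \<Rightarrow> nat \<Rightarrow> real vec" where
  "meas A C x0 e t = C *\<^sub>v traj A x0 t + e t"

definition attack_ok :: "nat \<Rightarrow> nat \<Rightarrow> (nat \<Rightarrow> real vec) \<Rightarrow> bool" where
  "attack_ok p s e = (\<exists>S \<subseteq> {0..<p}. card S \<le> s \<and>
      (\<forall>t. e t \<in> carrier_vec p \<and> (\<forall>j<p. j \<notin> S \<longrightarrow> e t $ j = 0)))"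

text \<open>Y[t] = (Y_1[t]^T,...,Y_p[t]^T)^T with Y_i[t] = (y_i[t],...,y_i[t+n-1])^T;
  entry i*n+k (0-based) is y_i[t+k].\<close>
definition stack_Y :: "nat \<Rightarrow> nat \<Rightarrow> (nat \<Rightarrow> real vec) \<Rightarrow> nat \<Rightarrow> real vec" where
  "stack_Y n p y t = vec (p * n) (\<lambda>q. y (t + q mod n) $ (q div n))"

definition dist_n :: "nat \<Rightarrow> real vec \<Rightarrow> real vec \<Rightarrow> real" where
  "dist_n n x z = sqrt (\<Sum>i<n. (x $ i - z $ i)\<^sup>2)"

end

theory Submission
  imports Defs
begin

(* Suppose (A, L D C) is not detectable for some L in P_2s(D): then A w = lam w with |lam| >= 1
  and L D C w = 0, so D C w = D zeta for a vector zeta supported on at most 2s sensors, and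
  D C A^t w = D (lam^t zeta) for all t. Split that support into two halves of at most s sensors
  each. For the real (and the imaginary) part x of w, the trajectory from x under the attack that
  cancels the first half of lam^t zeta and the zero trajectory under the attack equal to its second
  half produce the same filtered measurements D y[t]. The estimator only sees (D kron I_n) Y[t],
  which is a function of D y, so its output converges both to A^t x and to 0. Hence lam^t w -> 0,
  contradicting |lam| >= 1 and w <> 0. *)

lemma linear_Re: "linear Re" and linear_Im: "linear Im"
  by (simp_all add: bounded_linear.linear bounded_linear_Re bounded_linear_Im)

lemma complex_vec_eqI:
  fixes u u' :: "complex vec"
  assumes "dim_vec u = dim_vec u'" "map_vec Re u = map_vec Re u'" "map_vec Im u = map_vec Im u'"
  shows "u = u'"
proof (rule eq_vecI)
  fix i assume "i < dim_vec u'"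
  then show "u $ i = u' $ i"
    using assms by (metis complex_eqI index_map_vec(1))
qed (use assms in simp)

lemma map_vec_mult_mat_vec_of_real:
  fixes f :: "complex \<Rightarrow> real"
  assumes "linear f" and "M \<in> carrier_mat k m" and "w \<in> carrier_vec m"
  shows "map_vec f (map_mat complex_of_real M *\<^sub>v w) = M *\<^sub>v map_vec f w"
proof (rule eq_vecI)
  fix i assume "i < dim_vec (M *\<^sub>v map_vec f w)"
  then have i: "i < k" using assms(2) by simp
  have "f (row (map_mat complex_of_real M) i \<bullet> w) = (\<Sum>j<m. M $$ (i, j) * f (w $ j))"
    using assms i
    by (simp add: scalar_prod_def linear_sum linear_scale lessThan_atLeast0 flip: scaleR_conv_of_real)
  then show "map_vec f (map_mat complex_of_real M *\<^sub>v w) $ i = (M *\<^sub>v map_vec f w) $ i"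
    using assms i by (simp add: scalar_prod_def lessThan_atLeast0)
qed (use assms in simp)

lemma mult_mat_vec_zero: "A \<in> carrier_mat nr nc \<Longrightarrow> A *\<^sub>v 0\<^sub>v nc = 0\<^sub>v nr"
  by (intro eq_vecI) (auto simp: scalar_prod_def)

lemma power_mult_tendsto_zero_imp_zero:
  fixes lam c :: "'a::real_normed_div_algebra"
  assumes lam: "1 \<le> norm lam" and lim: "(\<lambda>t. lam ^ t * c) \<longlonglongrightarrow> 0"
  shows "c = 0"
proof -
  have "(\<lambda>t. norm (lam ^ t * c)) \<longlonglongrightarrow> 0" using lim by (rule tendsto_norm_zero)
  moreover have "norm c \<le> norm (lam ^ t * c)" for t
    using one_le_power[OF lam, of t] norm_ge_zero[of c]
    by (simp add: norm_mult norm_power mult_le_cancel_right1)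
  ultimately have "norm c \<le> 0" by (intro LIMSEQ_le_const) auto
  then show ?thesis by simp
qed

lemma abs_index_diff_le_dist_n:
  assumes "i < n"
  shows "\<bar>x $ i - z $ i\<bar> \<le> dist_n n x z"
proof -
  have "(x $ i - z $ i)\<^sup>2 \<le> (\<Sum>k<n. (x $ k - z $ k)\<^sup>2)"
    using assms by (intro member_le_sum) auto
  then show ?thesis
    unfolding dist_n_def by (metis real_sqrt_abs real_sqrt_le_mono)
qed

lemma tendsto_index_diff_zero_if_dist_n:
  assumes "(\<lambda>t. dist_n n (x t) (z t)) \<longlonglongrightarrow> 0" and "i < n"
  shows "(\<lambda>t. x t $ i - z t $ i) \<longlonglongrightarrow> 0"
  using order.trans[OF abs_index_diff_le_dist_n[OF assms(2)] abs_ge_self]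
  by (intro tendsto_0_le[OF assms(1), of _ 1] always_eventually allI) simp

lemma sum_lessThan_mult_if_mod_eq:
  fixes g :: "nat \<Rightarrow> 'a::comm_monoid_add"
  assumes "k < n"
  shows "(\<Sum>r<p * n. if r mod n = k then g (r div n) else 0) = (\<Sum>j<p. g j)"
proof -
  let ?f = "\<lambda>r. if r mod n = k then g (r div n) else 0"
  have "j * n + k < p * n" if "j < p" for j
  proof -
    have "j * n + k < Suc j * n" using assms by simp
    also have "\<dots> \<le> p * n" using that by (intro mult_le_mono1) simp
    finally show ?thesis .
  qed
  then have "(\<lambda>j. j * n + k) ` {..<p} \<subseteq> {..<p * n}" by auto
  moreover have "r \<in> (\<lambda>j. j * n + k) ` {..<p}" if "r < p * n" "r mod n = k" for r
    using that div_mult_mod_eq[of r n] less_mult_imp_div_less[of r p n] by (intro image_eqI) auto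
  ultimately have "sum ?f {..<p * n} = sum ?f ((\<lambda>j. j * n + k) ` {..<p})"
    by (intro sum.mono_neutral_right) auto
  also have "\<dots> = (\<Sum>j<p. g j)"
    using assms by (subst sum.reindex) (auto intro!: inj_onI)
  finally show ?thesis .
qed

lemma kron_one_mult_stack_Y:
  assumes D: "D \<in> carrier_mat v p" and y: "\<And>t. y t \<in> carrier_vec p"
  shows "kron D (1\<^sub>m n) *\<^sub>v stack_Y n p y \<tau> = stack_Y n v (\<lambda>t. D *\<^sub>v y t) \<tau>"
proof (rule eq_vecI)
  fix q assume "q < dim_vec (stack_Y n v (\<lambda>t. D *\<^sub>v y t) \<tau>)"
  then have q: "q < v * n" by (simp add: stack_Y_def)
  then have "n > 0" by (cases n) auto
  with q have k: "q mod n < n" and i: "q div n < v" by (simp_all add: less_mult_imp_div_less)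
  let ?y = "y (\<tau> + q mod n)"
  have "(kron D (1\<^sub>m n) *\<^sub>v stack_Y n p y \<tau>) $ q
      = (\<Sum>r<p * n. if r mod n = q mod n then D $$ (q div n, r div n) * ?y $ (r div n) else 0)"
    using q k \<open>n > 0\<close> D by (auto simp: kron_def stack_Y_def scalar_prod_def lessThan_atLeast0
        less_mult_imp_div_less intro!: sum.cong)
  also have "\<dots> = (\<Sum>j<p. D $$ (q div n, j) * ?y $ j)"
    by (rule sum_lessThan_mult_if_mod_eq[OF k])
  also have "\<dots> = stack_Y n v (\<lambda>t. D *\<^sub>v y t) \<tau> $ q"
    using q i D y[of "\<tau> + q mod n"]
    by (auto simp: stack_Y_def scalar_prod_def lessThan_atLeast0 intro!: sum.cong)
  finally show "(kron D (1\<^sub>m n) *\<^sub>v stack_Y n p y \<tau>) $ q = stack_Y n v (\<lambda>t. D *\<^sub>v y t) \<tau> $ q" .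
qed (use D in \<open>simp add: kron_def stack_Y_def\<close>)

definition supported_on :: "nat \<Rightarrow> nat set \<Rightarrow> 'a::zero vec \<Rightarrow> bool" where
  "supported_on p J z \<longleftrightarrow> z \<in> carrier_vec p \<and> (\<forall>j<p. j \<notin> J \<longrightarrow> z $ j = 0)"

lemma attack_ok_iff_supported_on:
  "attack_ok p s e \<longleftrightarrow> (\<exists>J \<subseteq> {0..<p}. card J \<le> s \<and> (\<forall>t. supported_on p J (e t)))"
  by (simp add: attack_ok_def supported_on_def)

lemma supported_on_map_vec:
  "supported_on p J z \<Longrightarrow> f 0 = 0 \<Longrightarrow> supported_on p J (map_vec f z)"
  by (auto simp: supported_on_def)

lemma supported_on_smult_vec:
  fixes z :: "'a::semiring_0 vec"
  shows "supported_on p J z \<Longrightarrow> supported_on p J (c \<cdot>\<^sub>v z)"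
  by (auto simp: supported_on_def)

lemma finite_split_card_le:
  assumes "finite J" and "card J \<le> a + b"
  obtains J' where "J' \<subseteq> J" "card J' \<le> a" "card (J - J') \<le> b"
proof (cases "card J \<le> a")
  case True
  then show ?thesis by (intro that[of J]) auto
next
  case False
  then obtain J' where "J' \<subseteq> J" "card J' = a"
    by (meson le_cases obtain_subset_with_card_n)
  moreover from this assms have "card (J - J') = card J - a"
    by (simp add: card_Diff_subset finite_subset)
  ultimately show ?thesis
    using assms by (intro that[of J']) auto
qed

lemma attack_ok_split_add:
  assumes "attack_ok p (s + s') z"
  obtains e e' where "attack_ok p s e" "attack_ok p s' e'" "\<And>t. z t = e t + e' t"
proof -
  obtain J where J: "J \<subseteq> {0..<p}" "card J \<le> s + s'" and z: "\<And>t. supported_on p J (z t)"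
    using assms unfolding attack_ok_iff_supported_on by blast
  have "finite J" using J(1) by (rule finite_subset) simp
  then obtain J' where J': "J' \<subseteq> J" "card J' \<le> s" "card (J - J') \<le> s'"
    using J(2) by (rule finite_split_card_le)
  define e where "e = (\<lambda>t. vec p (\<lambda>j. if j \<in> J' then z t $ j else 0))"
  define e' where "e' = (\<lambda>t. vec p (\<lambda>j. if j \<in> J - J' then z t $ j else 0))"
  show ?thesis
  proof (rule that[of e e'])
    show "attack_ok p s e"
      unfolding attack_ok_def e_def using J J' by (intro exI[of _ J']) auto
    show "attack_ok p s' e'"
      unfolding attack_ok_def e'_def using J J' by (intro exI[of _ "J - J'"]) auto
    show "z t = e t + e' t" for t
      using z[of t] unfolding e_def e'_def supported_on_def by (intro eq_vecI) auto
  qed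
qed

lemma attack_ok_uminus: "attack_ok p s e \<Longrightarrow> attack_ok p s (\<lambda>t. - e t)"
  unfolding attack_ok_def
  by (metis carrier_vecD index_uminus_vec(1) neg_equal_0_iff_equal uminus_carrier_vec)

lemma traj_carrier:
  "A \<in> carrier_mat n n \<Longrightarrow> x0 \<in> carrier_vec n \<Longrightarrow> traj A x0 t \<in> carrier_vec n"
  unfolding traj_def by (metis mult_mat_vec_carrier pow_carrier_mat)

lemma traj_zero: "A \<in> carrier_mat n n \<Longrightarrow> traj A (0\<^sub>v n) t = 0\<^sub>v n"
  unfolding traj_def by (simp add: mult_mat_vec_zero)

lemma finite_std_basis: "finite (std_basis p)"
  unfolding std_basis_def by (simp add: setcompr_eq_image)

lemma span_vecs_std_basis_supported_on:
  assumes V: "V \<subseteq> std_basis p" and z: "z \<in> span_vecs p V"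
  shows "supported_on p {j. j < p \<and> unit_vec p j \<in> V} z"
proof -
  obtain c where z_eq: "z = finsum_vec TYPE(real) p (\<lambda>w. c w \<cdot>\<^sub>v w) V"
    using z unfolding span_vecs_def by blast
  have fin: "finite V" using V finite_std_basis by (rule finite_subset)
  have carrier: "(\<lambda>w. c w \<cdot>\<^sub>v w) \<in> V \<rightarrow> carrier_vec p"
    using V unfolding std_basis_def by auto
  have "z $ k = 0" if k: "k < p" "unit_vec p k \<notin> V" for k
  proof -
    have "z $ k = (\<Sum>w\<in>V. (c w \<cdot>\<^sub>v w) $ k)"
      unfolding z_eq by (rule index_finsum_vec[OF fin k(1) carrier])
    also have "\<dots> = 0"
      using V k unfolding std_basis_def by (intro sum.neutral) auto
    finally show ?thesis .
  qed
  moreover have "z \<in> carrier_vec p"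
    unfolding z_eq by (rule finsum_vec_closed[OF carrier])
  ultimately show ?thesis unfolding supported_on_def by blast
qed

lemma card_std_basis_indices_le:
  assumes "V \<subseteq> std_basis p"
  shows "card {j. j < p \<and> unit_vec p j \<in> V} \<le> card V"
proof (rule card_inj_on_le)
  show "inj_on (unit_vec p :: nat \<Rightarrow> real vec) {j. j < p \<and> unit_vec p j \<in> V}"
    by (rule inj_onI) simp
  show "finite V" using assms finite_std_basis by (rule finite_subset)
qed auto

lemma P_set_kernel_supported_on:
  assumes L: "L \<in> P_set k D" and D: "D \<in> carrier_mat v p"
  obtains J where "J \<subseteq> {0..<p}" "card J \<le> k"
    "\<And>u. u \<in> carrier_vec p \<Longrightarrow> (L * D) *\<^sub>v u = 0\<^sub>v (dim_row L) \<Longrightarrow>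
       \<exists>z. supported_on p J z \<and> D *\<^sub>v u = D *\<^sub>v z"
proof -
  have dims: "dim_row D = v" "dim_col D = p" using D by auto
  obtain V where L_carrier: "L \<in> carrier_mat (dim_row L) v"
    and V: "V \<subseteq> std_basis p" "card V \<le> k"
    and ker: "mat_kernel L = (\<lambda>z. D *\<^sub>v z) ` span_vecs p V"
    using L unfolding P_set_def dims carrier_mat_def by blast
  let ?J = "{j. j < p \<and> unit_vec p j \<in> V}"
  show ?thesis
  proof (rule that[of ?J])
    show "?J \<subseteq> {0..<p}" by auto
    show "card ?J \<le> k" using card_std_basis_indices_le[OF V(1)] V(2) by linarith
    fix u assume u: "u \<in> carrier_vec p" and Lu: "(L * D) *\<^sub>v u = 0\<^sub>v (dim_row L)"
    have "D *\<^sub>v u \<in> mat_kernel L"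
    proof (rule mat_kernelI[OF L_carrier])
      show "D *\<^sub>v u \<in> carrier_vec v" using D u by simp
      show "L *\<^sub>v (D *\<^sub>v u) = 0\<^sub>v (dim_row L)"
        using Lu assoc_mult_mat_vec[OF L_carrier D u] by simp
    qed
    then show "\<exists>z. supported_on p ?J z \<and> D *\<^sub>v u = D *\<^sub>v z"
      using ker span_vecs_std_basis_supported_on[OF V(1)] by auto
  qed
qed

lemma P_set_kernel_supported_on_complex:
  fixes u :: "complex vec"
  assumes L: "L \<in> P_set k D" and D: "D \<in> carrier_mat v p" and u: "u \<in> carrier_vec p"
    and Lu: "map_mat complex_of_real (L * D) *\<^sub>v u = 0\<^sub>v (dim_row L)"
  obtains J \<zeta> where "J \<subseteq> {0..<p}" "card J \<le> k" "supported_on p J \<zeta>"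
    "map_mat complex_of_real D *\<^sub>v u = map_mat complex_of_real D *\<^sub>v \<zeta>"
proof -
  obtain J where J: "J \<subseteq> {0..<p}" "card J \<le> k"
    and ker: "\<And>u. u \<in> carrier_vec p \<Longrightarrow> (L * D) *\<^sub>v u = 0\<^sub>v (dim_row L) \<Longrightarrow>
       \<exists>z. supported_on p J z \<and> D *\<^sub>v u = D *\<^sub>v z"
    using P_set_kernel_supported_on[OF L D] by blast
  have LD: "L * D \<in> carrier_mat (dim_row L) p" using D by auto
  have "\<exists>z. supported_on p J z \<and> D *\<^sub>v map_vec f u = D *\<^sub>v z" if f: "linear f" for f
  proof (rule ker)
    show "map_vec f u \<in> carrier_vec p" using u by simp
    have "(L * D) *\<^sub>v map_vec f u = map_vec f (0\<^sub>v (dim_row L))"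
      using map_vec_mult_mat_vec_of_real[OF f LD u] Lu by simp
    also have "\<dots> = 0\<^sub>v (dim_row L)"
      using linear_0[OF f] by (intro eq_vecI) auto
    finally show "(L * D) *\<^sub>v map_vec f u = 0\<^sub>v (dim_row L)" .
  qed
  then obtain zr zi where zr: "supported_on p J zr" "D *\<^sub>v map_vec Re u = D *\<^sub>v zr"
    and zi: "supported_on p J zi" "D *\<^sub>v map_vec Im u = D *\<^sub>v zi"
    using linear_Re linear_Im by blast
  define \<zeta> where "\<zeta> = vec p (\<lambda>j. Complex (zr $ j) (zi $ j))"
  have \<zeta>_parts: "map_vec Re \<zeta> = zr" "map_vec Im \<zeta> = zi"
    using zr(1) zi(1) unfolding \<zeta>_def supported_on_def by auto
  show ?thesis
  proof (rule that[OF J])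
    show "supported_on p J \<zeta>"
      using zr(1) zi(1) unfolding \<zeta>_def supported_on_def by (simp add: Complex_eq)
    have \<zeta>_carrier: "\<zeta> \<in> carrier_vec p" unfolding \<zeta>_def by simp
    show "map_mat complex_of_real D *\<^sub>v u = map_mat complex_of_real D *\<^sub>v \<zeta>"
      using D u zr(2) zi(2)
      by (intro complex_vec_eqI)
        (simp_all add: map_vec_mult_mat_vec_of_real[OF linear_Re]
          map_vec_mult_mat_vec_of_real[OF linear_Im] \<zeta>_carrier \<zeta>_parts)
  qed
qed

definition resilient_estimator ::
    "nat \<Rightarrow> nat \<Rightarrow> nat \<Rightarrow> real mat \<Rightarrow> real mat \<Rightarrow> real mat
      \<Rightarrow> ((nat \<Rightarrow> real vec) \<Rightarrow> (nat \<Rightarrow> real vec)) \<Rightarrow> bool" where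
  "resilient_estimator n p s A C D F \<longleftrightarrow> (\<forall>x0 \<in> carrier_vec n. \<forall>e. attack_ok p s e \<longrightarrow>
     (\<lambda>t. dist_n n (traj A x0 t)
            (F (\<lambda>\<tau>. kron D (1\<^sub>m n) *\<^sub>v stack_Y n p (meas A C x0 e) \<tau>) t))
     \<longlonglongrightarrow> 0)"

lemma resilient_estimator_indistinguishable_tendsto_zero:
  assumes F: "resilient_estimator n p s A C D F"
    and A: "A \<in> carrier_mat n n" and C: "C \<in> carrier_mat p n" and D: "D \<in> carrier_mat v p"
    and x0: "x0 \<in> carrier_vec n" and z: "attack_ok p (2 * s) z"
    and indist: "\<And>t. D *\<^sub>v (C *\<^sub>v traj A x0 t) = D *\<^sub>v z t"
    and i: "i < n"
  shows "(\<lambda>t. traj A x0 t $ i) \<longlonglongrightarrow> 0"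
proof -
  obtain e e' where e: "attack_ok p s e" and e': "attack_ok p s e'"
    and z_eq: "\<And>t. z t = e t + e' t"
    using z by (auto simp: mult_2 elim: attack_ok_split_add)
  have e_carrier: "e t \<in> carrier_vec p" and e'_carrier: "e' t \<in> carrier_vec p" for t
    using e e' unfolding attack_ok_def by auto
  let ?y = "meas A C x0 (\<lambda>t. - e t)" and ?y' = "meas A C (0\<^sub>v n) e'"
  have y_carrier: "?y t \<in> carrier_vec p" and y'_carrier: "?y' t \<in> carrier_vec p" for t
    using C traj_carrier[OF A x0] e_carrier e'_carrier by (auto simp: meas_def traj_zero[OF A])
  have "D *\<^sub>v ?y t = D *\<^sub>v ?y' t" for t
  proof -
    have "D *\<^sub>v ?y t = D *\<^sub>v z t + D *\<^sub>v (- e t)"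
      using C traj_carrier[OF A x0] e_carrier
      by (simp add: meas_def mult_add_distrib_mat_vec[OF D] indist)
    also have "\<dots> = D *\<^sub>v e' t"
      using D e_carrier[of t] e'_carrier[of t]
      by (intro eq_vecI) (auto simp: z_eq scalar_prod_add_distrib[of _ p])
    also have "\<dots> = D *\<^sub>v ?y' t"
      using C e'_carrier[of t] by (simp add: meas_def traj_zero[OF A] mult_mat_vec_zero)
    finally show ?thesis .
  qed
  then have same_input: "(\<lambda>\<tau>. kron D (1\<^sub>m n) *\<^sub>v stack_Y n p ?y \<tau>)
      = (\<lambda>\<tau>. kron D (1\<^sub>m n) *\<^sub>v stack_Y n p ?y' \<tau>)"
    by (simp add: kron_one_mult_stack_Y[OF D y_carrier] kron_one_mult_stack_Y[OF D y'_carrier])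
  define X where "X = F (\<lambda>\<tau>. kron D (1\<^sub>m n) *\<^sub>v stack_Y n p ?y \<tau>)"
  have "(\<lambda>t. dist_n n (traj A x0 t) (X t)) \<longlonglongrightarrow> 0"
    using F x0 attack_ok_uminus[OF e] unfolding resilient_estimator_def X_def by blast
  from tendsto_index_diff_zero_if_dist_n[OF this i]
  have "(\<lambda>t. traj A x0 t $ i - X t $ i) \<longlonglongrightarrow> 0" .
  moreover have "(\<lambda>t. dist_n n (traj A (0\<^sub>v n) t) (X t)) \<longlonglongrightarrow> 0"
    using F e' unfolding resilient_estimator_def X_def same_input by simp
  from tendsto_index_diff_zero_if_dist_n[OF this i]
  have "(\<lambda>t. - X t $ i) \<longlonglongrightarrow> 0" using i by (simp add: traj_zero[OF A])
  ultimately have "(\<lambda>t. (traj A x0 t $ i - X t $ i) - (- X t $ i)) \<longlonglongrightarrow> 0 - 0"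
    by (rule tendsto_diff)
  then show ?thesis by simp
qed

lemma resilient_estimator_complex_indistinguishable_tendsto_zero:
  fixes w :: "complex vec" and \<zeta> :: "nat \<Rightarrow> complex vec" and f :: "complex \<Rightarrow> real"
  assumes F: "resilient_estimator n p s A C D F"
    and A: "A \<in> carrier_mat n n" and C: "C \<in> carrier_mat p n" and D: "D \<in> carrier_mat v p"
    and w: "w \<in> carrier_vec n"
    and J: "J \<subseteq> {0..<p}" "card J \<le> 2 * s" and \<zeta>: "\<And>t. supported_on p J (\<zeta> t)"
    and indist: "\<And>t. map_mat complex_of_real D *\<^sub>v (map_mat complex_of_real C *\<^sub>v
                       (map_mat complex_of_real A ^\<^sub>m t *\<^sub>v w)) = map_mat complex_of_real D *\<^sub>v \<zeta> t"
    and f: "linear f" and i: "i < n"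
  shows "(\<lambda>t. f ((map_mat complex_of_real A ^\<^sub>m t *\<^sub>v w) $ i)) \<longlonglongrightarrow> 0"
proof -
  let ?x0 = "map_vec f w"
  have traj_eq: "traj A ?x0 t = map_vec f (map_mat complex_of_real A ^\<^sub>m t *\<^sub>v w)" for t
    using map_vec_mult_mat_vec_of_real[OF f pow_carrier_mat[OF A] w]
    by (simp add: traj_def of_real_hom.mat_hom_pow[OF A])
  have "D *\<^sub>v (C *\<^sub>v traj A ?x0 t) = D *\<^sub>v map_vec f (\<zeta> t)" for t
  proof -
    let ?cA = "map_mat complex_of_real A" and ?cC = "map_mat complex_of_real C"
      and ?cD = "map_mat complex_of_real D"
    have w_t: "?cA ^\<^sub>m t *\<^sub>v w \<in> carrier_vec n"
      using A w by (metis map_carrier_mat mult_mat_vec_carrier pow_carrier_mat)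
    have "D *\<^sub>v (C *\<^sub>v traj A ?x0 t) = map_vec f (?cD *\<^sub>v (?cC *\<^sub>v (?cA ^\<^sub>m t *\<^sub>v w)))"
      using C D w_t by (simp add: traj_eq map_vec_mult_mat_vec_of_real[OF f])
    also have "\<dots> = D *\<^sub>v map_vec f (\<zeta> t)"
      using D \<zeta>[of t] by (simp add: indist map_vec_mult_mat_vec_of_real[OF f] supported_on_def)
    finally show ?thesis .
  qed
  moreover have "attack_ok p (2 * s) (\<lambda>t. map_vec f (\<zeta> t))"
    unfolding attack_ok_iff_supported_on using J \<zeta> linear_0[OF f]
    by (blast intro: supported_on_map_vec)
  ultimately have "(\<lambda>t. traj A ?x0 t $ i) \<longlonglongrightarrow> 0"
    using w by (intro resilient_estimator_indistinguishable_tendsto_zero[OF F A C D _ _ _ i]) auto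
  then show ?thesis
    using A w i by (simp add: traj_eq)
qed

lemma resilient_estimator_unobservable_eigenvector_decays:
  fixes w :: "complex vec" and lam :: complex
  assumes F: "resilient_estimator n p s A C D F"
    and A: "A \<in> carrier_mat n n" and C: "C \<in> carrier_mat p n" and D: "D \<in> carrier_mat v p"
    and L: "L \<in> P_set (2 * s) D" and ev: "eigenvector (map_mat complex_of_real A) w lam"
    and LDCw: "map_mat complex_of_real (L * D * C) *\<^sub>v w = 0\<^sub>v (dim_row L)"
    and i: "i < n"
  shows "(\<lambda>t. lam ^ t * w $ i) \<longlonglongrightarrow> 0"
proof -
  let ?cA = "map_mat complex_of_real A" and ?cC = "map_mat complex_of_real C"
    and ?cD = "map_mat complex_of_real D"
  have cA: "?cA \<in> carrier_mat n n" and cC: "?cC \<in> carrier_mat p n" using A C by auto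
  have w: "w \<in> carrier_vec n" using ev A unfolding eigenvector_def by auto
  have LD: "L * D \<in> carrier_mat (dim_row L) p" using D by auto
  have "map_mat complex_of_real (L * D) *\<^sub>v (?cC *\<^sub>v w) = 0\<^sub>v (dim_row L)"
    using LDCw assoc_mult_mat_vec[OF map_carrier_mat[THEN iffD2, OF LD] cC w]
    by (simp add: of_real_hom.mat_hom_mult[OF LD C])
  then obtain J \<zeta> where J: "J \<subseteq> {0..<p}" "card J \<le> 2 * s" and \<zeta>: "supported_on p J \<zeta>"
    and DCw: "?cD *\<^sub>v (?cC *\<^sub>v w) = ?cD *\<^sub>v \<zeta>"
    using P_set_kernel_supported_on_complex[OF L D] cC w by (metis mult_mat_vec_carrier)
  have pow: "?cA ^\<^sub>m t *\<^sub>v w = lam ^ t \<cdot>\<^sub>v w" for t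
    using eigenvector_pow[OF cA ev] .
  have "?cD *\<^sub>v (?cC *\<^sub>v (?cA ^\<^sub>m t *\<^sub>v w)) = ?cD *\<^sub>v (lam ^ t \<cdot>\<^sub>v \<zeta>)" for t
    using cC D w \<zeta> by (simp add: pow DCw mult_mat_vec supported_on_def)
  then have "(\<lambda>t. f ((?cA ^\<^sub>m t *\<^sub>v w) $ i)) \<longlonglongrightarrow> 0"
    if "linear f" for f :: "complex \<Rightarrow> real"
    by (rule resilient_estimator_complex_indistinguishable_tendsto_zero
        [OF F A C D w J supported_on_smult_vec[OF \<zeta>] _ that i])
  then have "(\<lambda>t. (?cA ^\<^sub>m t *\<^sub>v w) $ i) \<longlonglongrightarrow> 0"
    using linear_Re linear_Im by (simp add: tendsto_complex_iff)
  then show ?thesis using i w by (simp add: pow)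
qed

theorem lemma2:
  fixes A C D :: "real mat" and n p v s :: nat
    and F :: "(nat \<Rightarrow> real vec) \<Rightarrow> (nat \<Rightarrow> real vec)"
  assumes "A \<in> carrier_mat n n" and "C \<in> carrier_mat p n" and "D \<in> carrier_mat v p"
    and "\<forall>x0 \<in> carrier_vec n. \<forall>e. attack_ok p s e \<longrightarrow>
           (\<lambda>t. dist_n n (traj A x0 t)
                  (F (\<lambda>\<tau>. kron D (1\<^sub>m n) *\<^sub>v stack_Y n p (meas A C x0 e) \<tau>) t))
           \<longlonglongrightarrow> 0"
  shows "sparse_detectable (2 * s) A C D"
  unfolding sparse_detectable_def detectable_def
proof (intro ballI allI impI notI)
  fix L w lam
  assume L: "L \<in> P_set (2 * s) D"
    and ev: "eigenvector (map_mat complex_of_real A) w lam \<and> 1 \<le> cmod lam"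
    and LDCw: "map_mat complex_of_real (L * D * C) *\<^sub>v w = 0\<^sub>v (dim_row (L * D * C))"
  have F: "resilient_estimator n p s A C D F"
    using assms(4) unfolding resilient_estimator_def .
  have "w $ i = 0" if "i < n" for i
    using resilient_estimator_unobservable_eigenvector_decays[OF F assms(1-3) L _ _ that] ev LDCw
    by (auto intro: power_mult_tendsto_zero_imp_zero)
  moreover have "w \<in> carrier_vec n" "w \<noteq> 0\<^sub>v n"
    using ev assms(1) unfolding eigenvector_def by auto
  ultimately show False by auto
qed

end
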